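(* Let $F:\mathbb{R}\to(0,1)$ be a continuous, strictly increasing cumulative distribution function with $\lim_{u\to-\infty}F(u)=0$ and $\lim_{u\to+\infty}F(u)=1$, so that $F^{-1}:(0,1)\to\mathbb{R}$ exists and is continuous and strictly increasing. Define the mirror map $\Phi:(0,1)^m\to\mathbb{R}$ by $\Phi(\boldsymbol\theta)=\sum_{i=1}^m\int_{1/2}^{\theta_i}F^{-1}(u)\,du$ and its Bregman divergence $D_\Phi(\boldsymbol\theta,\boldsymbol\theta')=\Phi(\boldsymbol\theta)-\Phi(\boldsymbol\theta')-\langle\nabla\Phi(\boldsymbol\theta'),\boldsymbol\theta-\boldsymbol\theta'\rangle$. Let $\boldsymbol\eta^t\in\mathbb{R}^m$, $\boldsymbol\theta^t=F(\boldsymbol\eta^t)$ (coordinate-wise), $\mathbf{g}^t\in\mathbb{R}^m$ arbitrary and $\varepsilon>0$. Then the (stochastic) mirror descent step $$\boldsymbol\theta^{t+1}=\arg\min_{\boldsymbol\theta\in(0,1)^m}\Big\{\langle\mathbf{g}^t,\boldsymbol\theta-\boldsymbol\theta^t\rangle+\tfrac1\varepsilon D_\Phi(\boldsymbol\theta,\boldsymbol\theta^t)\Big\}$$ has a unique solution, and it equals $F(\boldsymbol\eta^{t+1})$ where $\boldsymbol\eta^{t+1}=\boldsymbol\eta^t-\varepsilon\mathbf{g}^t$. In particular, plain SGD on the latent weights $\boldsymbol\eta$, $\boldsymbol\eta^{t+1}=\boldsymbol\eta^t-\varepsilon\hat{\mathbf g}^t$, where $\hat{\mathbf g}^t$ is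 the identity straight-through-weights estimate (defined in the context) computed at $\boldsymbol\eta^t$, implements stochastic mirror descent in the weight probabilities $\boldsymbol\theta=F(\boldsymbol\eta)$ with divergence $D_\Phi$ and stochastic gradient $\hat{\mathbf g}^t$.
   Context: Binary weights $\mathbf{w}\in\{-1,1\}^m$ have independent coordinates with $P(w_i=1)=\theta_i$; they are modelled as $w_i=\mathrm{sign}(\eta_i-z_i)$ with independent noises $z_i$ of cdf $F$, so $\theta_i=F(\eta_i)$; the $\eta_i\in\mathbb{R}$ are called latent weights. For a differentiable loss $\mathcal{L}:\mathbb{R}^m\to\mathbb{R}$ one wishes to minimize $\mathbb{E}_{\mathbf{w}}[\mathcal{L}(\mathbf{w})]$ over $\boldsymbol\theta\in[0,1]^m$. The identity straight-through-weights estimator: on the forward pass sample $\mathbf{w}$ with $P(w_i=1)=F(\eta_i)$; on the backward pass set the gradient with respect to $\boldsymbol\eta$ to $\hat{\mathbf g}=2\nabla_{\mathbf w}\mathcal{L}(\mathbf{w})$ (i.e., the factor $F'(\eta_i)$ of the chain rule is omitted); $\hat{\mathbf g}$ serves as a (straight-through) estimate of $\nabla_{\boldsymbol\theta}\mathbb{E}_{\mathbf w}[\mathcal{L}(\mathbf w)]$. *)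

theory Defs
  imports "HOL-Analysis.Analysis"
begin

definition open_cube :: "(real ^ 'm) set" where
  "open_cube = {\<theta>. \<forall>i. 0 < \<theta> $ i \<and> \<theta> $ i < 1}"

text \<open>Mirror map: Phi(theta) = sum_i integral from 1/2 to theta_i of F^{-1}(u) du
  (oriented interval integral; F^{-1} = inv F).\<close>
definition mirror_map :: "(real \<Rightarrow> real) \<Rightarrow> real ^ 'm \<Rightarrow> real" where
  "mirror_map F \<theta> = (\<Sum>i\<in>UNIV. (LBINT u = ereal (1/2)..ereal (\<theta> $ i). inv F u))"

text \<open>Bregman divergence, with the gradient term given by the Frechet derivative of Phi
  at theta' applied to theta - theta', i.e. the inner product with grad Phi(theta').\<close>
definition bregman :: "(real \<Rightarrow> real) \<Rightarrow> real ^ 'm \<Rightarrow> real ^ 'm \<Rightarrow> real" where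
  "bregman F \<theta> \<theta>' = mirror_map F \<theta> - mirror_map F \<theta>'
     - frechet_derivative (mirror_map F) (at \<theta>') (\<theta> - \<theta>')"

definition md_objective ::
  "(real \<Rightarrow> real) \<Rightarrow> real \<Rightarrow> real ^ 'm \<Rightarrow> real ^ 'm \<Rightarrow> real ^ 'm \<Rightarrow> real" where
  "md_objective F \<epsilon> g \<theta>t \<theta> = inner g (\<theta> - \<theta>t) + (1 / \<epsilon>) * bregman F \<theta> \<theta>t"

end

theory Submission
  imports Defs
begin

text \<open>The mirror map is separable with partial derivatives
  \<open>\<partial>\<Phi>/\<partial>\<theta>\<^sub>i = F\<^sup>-\<^sup>1(\<theta>\<^sub>i)\<close>, so the mirror descent objective splits into one-dimensional
  problems in the coordinates \<open>\<theta>\<^sub>i\<close>. The derivative of the \<open>i\<close>-th one is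
  \<open>(F\<^sup>-\<^sup>1(x) - (\<eta>\<^sub>i - \<epsilon> g\<^sub>i)) / \<epsilon>\<close>, which is strictly increasing and vanishes exactly at
  \<open>x = F(\<eta>\<^sub>i - \<epsilon> g\<^sub>i)\<close>. That point is therefore the unique minimiser of each coordinate
  problem, and hence of their sum.\<close>

lemma DERIV_sign_change_imp_strict_min:
  fixes f d :: "real \<Rightarrow> real"
  assumes deriv: "\<And>y. a < y \<Longrightarrow> y < b \<Longrightarrow> (f has_real_derivative d y) (at y)"
    and neg: "\<And>y. a < y \<Longrightarrow> y < c \<Longrightarrow> d y < 0"
    and pos: "\<And>y. c < y \<Longrightarrow> y < b \<Longrightarrow> d y > 0"
    and "a < c" "c < b" "a < x" "x < b" "x \<noteq> c"
  shows "f c < f x"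
proof -
  have cont: "continuous_on {u..v} f" if "a < u" "v < b" for u v
    using that by (intro continuous_at_imp_continuous_on ballI DERIV_isCont[OF deriv]) auto
  consider "x < c" | "c < x" using \<open>x \<noteq> c\<close> by linarith
  then show ?thesis
  proof cases
    case 1
    have "\<exists>l. (f has_real_derivative l) (at y) \<and> l < 0" if "x < y" "y < c" for y
      using deriv[of y] neg[of y] that \<open>a < x\<close> \<open>c < b\<close> by auto
    then show ?thesis using DERIV_neg_imp_decreasing_open[OF 1 _ cont] assms(6) \<open>c < b\<close> by blast
  next
    case 2
    have "\<exists>l. (f has_real_derivative l) (at y) \<and> l > 0" if "c < y" "y < x" for y
      using deriv[of y] pos[of y] that \<open>a < c\<close> \<open>x < b\<close> by auto
    then show ?thesis using DERIV_pos_imp_increasing_open[OF 2 _ cont] assms(4) \<open>x < b\<close> by blast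
  qed
qed

lemma argmin_coordinatewise_sum:
  fixes c :: "'a ^ 'n" and f :: "'n \<Rightarrow> 'a \<Rightarrow> real"
  assumes "\<And>i. c $ i \<in> S"
    and strict_min: "\<And>i x. x \<in> S \<Longrightarrow> x \<noteq> c $ i \<Longrightarrow> f i (c $ i) < f i x"
  shows "{\<theta> \<in> {\<theta>. \<forall>i. \<theta> $ i \<in> S}. \<forall>\<theta>' \<in> {\<theta>. \<forall>i. \<theta> $ i \<in> S}.
            (\<Sum>i\<in>UNIV. f i (\<theta> $ i)) \<le> (\<Sum>i\<in>UNIV. f i (\<theta>' $ i))} = {c}"
    (is "?argmin = _")
proof -
  have le: "f i (c $ i) \<le> f i (\<theta> $ i)" if "\<forall>i. \<theta> $ i \<in> S" for \<theta> i
    using strict_min[of "\<theta> $ i" i] that by (cases "\<theta> $ i = c $ i") auto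
  have less: "(\<Sum>i\<in>UNIV. f i (c $ i)) < (\<Sum>i\<in>UNIV. f i (\<theta> $ i))"
    if "\<forall>i. \<theta> $ i \<in> S" "\<theta> \<noteq> c" for \<theta>
  proof -
    obtain j where "\<theta> $ j \<noteq> c $ j" using \<open>\<theta> \<noteq> c\<close> by (metis vec_eq_iff)
    then have "f j (c $ j) < f j (\<theta> $ j)" using strict_min that(1) by blast
    then show ?thesis using le[OF that(1)] by (intro sum_strict_mono_ex1) auto
  qed
  have "c \<in> ?argmin" using assms(1) le by (auto intro: sum_mono)
  moreover have "\<theta> = c" if "\<theta> \<in> ?argmin" for \<theta>
    using that assms(1) less[of \<theta>] by force
  ultimately show ?thesis by blast
qed

locale continuous_cdf =
  fixes F :: "real \<Rightarrow> real"
  assumes continuous: "continuous_on UNIV F"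
    and strict_mono: "strict_mono F"
    and range_unit: "\<And>x. 0 < F x \<and> F x < 1"
    and tendsto_at_bot: "(F \<longlongrightarrow> 0) at_bot"
    and tendsto_at_top: "(F \<longlongrightarrow> 1) at_top"
begin

lemma inv_F_F [simp]: "inv F (F x) = x"
proof -
  have "inj F" using strict_mono strict_mono_on_imp_inj_on by blast
  then show ?thesis by simp
qed

lemma isCont_F: "isCont F x"
  using continuous by (simp add: continuous_on_eq_continuous_at)

lemma ex_F_eq:
  assumes "0 < u" "u < 1"
  shows "\<exists>x. F x = u"
proof -
  obtain a where a: "F a < u"
    using order_tendstoD(2)[OF tendsto_at_bot \<open>0 < u\<close>] by (meson eventually_at_bot_linorder order_refl)
  obtain b where b: "u < F b"
    using order_tendstoD(1)[OF tendsto_at_top \<open>u < 1\<close>] by (meson eventually_at_top_linorder order_refl)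
  have "F a < F b" using a b by linarith
  then have "a \<le> b" using strict_mono by (simp add: strict_mono_less less_imp_le)
  then show ?thesis
    using IVT[of F a u b] a b isCont_F by auto
qed

lemma F_inv_F:
  assumes "0 < u" "u < 1"
  shows "F (inv F u) = u"
  using ex_F_eq[OF assms] by force

lemma inv_F_less_iff:
  assumes "0 < u" "u < 1" "0 < v" "v < 1"
  shows "inv F u < inv F v \<longleftrightarrow> u < v"
  using F_inv_F[OF assms(1,2)] F_inv_F[OF assms(3,4)] strict_mono by (metis strict_mono_less)

lemma isCont_inv_F:
  assumes "0 < u" "u < 1"
  shows "isCont (inv F) u"
proof -
  obtain x where "F x = u" using ex_F_eq assms by blast
  moreover have "isCont (inv F) (F x)"
    by (rule isCont_inverse_function[of 1]) (auto simp: isCont_F)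
  ultimately show ?thesis by simp
qed

definition mirror_coord :: "real \<Rightarrow> real" where
  "mirror_coord x = (LBINT u = ereal (1/2)..ereal x. inv F u)"

lemma mirror_map_eq_sum: "mirror_map F = (\<lambda>\<theta>. \<Sum>i\<in>UNIV. mirror_coord (\<theta> $ i))"
  by (simp add: mirror_map_def[abs_def] mirror_coord_def)

lemma mirror_coord_has_real_derivative:
  assumes "0 < x" "x < 1"
  shows "(mirror_coord has_real_derivative inv F x) (at x)"
proof -
  define a where "a = min (1/2) x / 2"
  define b where "b = (max (1/2) x + 1) / 2"
  have ab: "0 < a" "b < 1" "a < x" "x < b" "a \<le> 1/2" "1/2 \<le> b"
    using assms by (auto simp: a_def b_def)
  have "continuous_on {a..b} (inv F)"
    using ab by (intro continuous_at_imp_continuous_on ballI isCont_inv_F) auto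
  from interval_integral_FTC2[OF ab(5,6) this, of x]
  have "(mirror_coord has_vector_derivative inv F x) (at x within {a..b})"
    unfolding mirror_coord_def[abs_def] using ab by simp
  moreover have "at x within {a..b} = at x" using ab by (intro at_within_interior) auto
  ultimately show ?thesis
    by (simp add: has_real_derivative_iff_has_vector_derivative)
qed

lemma mirror_map_has_derivative:
  assumes "\<theta> \<in> open_cube"
  shows "(mirror_map F has_derivative (\<lambda>h. \<Sum>i\<in>UNIV. inv F (\<theta> $ i) * h $ i)) (at \<theta>)"
proof -
  have "((\<lambda>\<theta>. mirror_coord (\<theta> $ i)) has_derivative (\<lambda>h. inv F (\<theta> $ i) * h $ i)) (at \<theta>)" for i
  proof -
    have "(mirror_coord has_derivative (*) (inv F (\<theta> $ i))) (at (\<theta> $ i))"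
      using assms by (intro has_field_derivative_imp_has_derivative mirror_coord_has_real_derivative)
        (auto simp: open_cube_def)
    from has_derivative_compose[OF bounded_linear_vec_nth[THEN bounded_linear.has_derivative,
        OF has_derivative_ident] this]
    show ?thesis .
  qed
  then show ?thesis unfolding mirror_map_eq_sum by (intro has_derivative_sum) auto
qed

text \<open>The \<open>i\<close>-th summand of the objective at \<open>\<theta>\<^sup>t = F(\<eta>)\<close>; the gradient of the mirror map
  there is \<open>\<eta>\<close> itself, because \<open>inv F \<circ> F = id\<close>.\<close>
definition md_coord :: "real \<Rightarrow> real \<Rightarrow> real \<Rightarrow> real \<Rightarrow> real" where
  "md_coord \<epsilon> g\<^sub>i \<eta>\<^sub>i x =
     g\<^sub>i * (x - F \<eta>\<^sub>i) + (1 / \<epsilon>) * (mirror_coord x - mirror_coord (F \<eta>\<^sub>i) - \<eta>\<^sub>i * (x - F \<eta>\<^sub>i))"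

lemma md_objective_eq_sum:
  fixes \<eta> g :: "real ^ 'm"
  shows "md_objective F \<epsilon> g (\<chi> i. F (\<eta> $ i))
           = (\<lambda>\<theta>. \<Sum>i\<in>UNIV. md_coord \<epsilon> (g $ i) (\<eta> $ i) (\<theta> $ i))"
proof -
  have "(\<chi> i. F (\<eta> $ i)) \<in> open_cube" using range_unit by (simp add: open_cube_def)
  from frechet_derivative_at[OF mirror_map_has_derivative[OF this]]
  have "frechet_derivative (mirror_map F) (at (\<chi> i. F (\<eta> $ i))) = (\<lambda>h. \<Sum>i\<in>UNIV. \<eta> $ i * h $ i)"
    by simp
  then show ?thesis
    by (simp add: fun_eq_iff md_objective_def bregman_def mirror_map_eq_sum inner_vec_def md_coord_def
        sum_subtractf sum_distrib_left sum.distrib algebra_simps)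
qed

lemma md_coord_has_real_derivative:
  assumes "0 < x" "x < 1"
  shows "(md_coord \<epsilon> g\<^sub>i \<eta>\<^sub>i has_real_derivative g\<^sub>i + (inv F x - \<eta>\<^sub>i) / \<epsilon>) (at x)"
proof -
  have "(md_coord \<epsilon> g\<^sub>i \<eta>\<^sub>i has_real_derivative
          g\<^sub>i * (1 - 0) + (1 / \<epsilon>) * (inv F x - 0 - \<eta>\<^sub>i * (1 - 0))) (at x)"
    unfolding md_coord_def[abs_def]
    by (intro DERIV_add DERIV_cmult DERIV_diff DERIV_ident DERIV_const
        mirror_coord_has_real_derivative[OF assms])
  then show ?thesis by (simp add: diff_divide_distrib)
qed

lemma md_coord_strict_min:
  assumes "\<epsilon> > 0" "0 < x" "x < 1" "x \<noteq> F (\<eta>\<^sub>i - \<epsilon> * g\<^sub>i)"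
  shows "md_coord \<epsilon> g\<^sub>i \<eta>\<^sub>i (F (\<eta>\<^sub>i - \<epsilon> * g\<^sub>i)) < md_coord \<epsilon> g\<^sub>i \<eta>\<^sub>i x"
proof (rule DERIV_sign_change_imp_strict_min[OF md_coord_has_real_derivative])
  let ?c = "F (\<eta>\<^sub>i - \<epsilon> * g\<^sub>i)"
  have sign_neg: "g\<^sub>i + (inv F y - \<eta>\<^sub>i) / \<epsilon> < 0 \<longleftrightarrow> y < ?c"
    and sign_pos: "g\<^sub>i + (inv F y - \<eta>\<^sub>i) / \<epsilon> > 0 \<longleftrightarrow> ?c < y" if "0 < y" "y < 1" for y
    using inv_F_less_iff[of y ?c] inv_F_less_iff[of ?c y] range_unit that \<open>\<epsilon> > 0\<close>
    by (auto simp: field_simps)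
  show "g\<^sub>i + (inv F y - \<eta>\<^sub>i) / \<epsilon> < 0" if "0 < y" "y < ?c" for y
    using sign_neg that range_unit[of "\<eta>\<^sub>i - \<epsilon> * g\<^sub>i"] by auto
  show "g\<^sub>i + (inv F y - \<eta>\<^sub>i) / \<epsilon> > 0" if "?c < y" "y < 1" for y
    using sign_pos that range_unit[of "\<eta>\<^sub>i - \<epsilon> * g\<^sub>i"] by auto
qed (use assms range_unit in auto)

end

theorem proposition1:
  fixes F :: "real \<Rightarrow> real" and \<eta> g :: "real ^ 'm" and \<epsilon> :: real
  assumes "continuous_on UNIV F"
    and "strict_mono F"
    and "\<And>x. 0 < F x \<and> F x < 1"
    and "(F \<longlongrightarrow> 0) at_bot"
    and "(F \<longlongrightarrow> 1) at_top"
    and "\<epsilon> > 0"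
  shows "{\<theta> \<in> open_cube. \<forall>\<theta>'\<in>open_cube.
            md_objective F \<epsilon> g (\<chi> i. F (\<eta> $ i)) \<theta>
              \<le> md_objective F \<epsilon> g (\<chi> i. F (\<eta> $ i)) \<theta>'}
         = {\<chi> i. F ((\<eta> - \<epsilon> *\<^sub>R g) $ i)}"
proof -
  interpret continuous_cdf F using assms(1-5) by unfold_locales
  let ?step = "\<chi> i. F ((\<eta> - \<epsilon> *\<^sub>R g) $ i)"
  have cube: "open_cube = {\<theta>. \<forall>i. \<theta> $ i \<in> {0<..<1::real}}" by (auto simp: open_cube_def)
  show ?thesis
    unfolding md_objective_eq_sum cube
  proof (rule argmin_coordinatewise_sum)
    show "?step $ i \<in> {0<..<1}" for i using range_unit by simp
    show "md_coord \<epsilon> (g $ i) (\<eta> $ i) (?step $ i) < md_coord \<epsilon> (g $ i) (\<eta> $ i) x"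
      if "x \<in> {0<..<1}" "x \<noteq> ?step $ i" for i x
      using md_coord_strict_min[OF assms(6)] that by simp
  qed
qed

end
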